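(* Let $\mathcal{K}$ be a continuous unitary representation of $\overline{\mathfrak{S}}_\infty$ in a Hilbert space $\mathcal{H}$, let $n\geq 0$ be an integer, and let $P_n$ be the weak-operator limit of $\mathcal{K}({}^n\sigma_m)$ as $m\to\infty$. Then $P_n$ is a projection, i.e. $P_n^2=P_n$.
   Context: $\overline{\mathfrak{S}}_\infty$ is the group of all bijections of $\mathbb{N}$, with the Polish topology in which the subgroups $\mathfrak{S}(n,\infty)=\{s: s(k)=k \text{ for } k=1,\dots,n\}$ form a fundamental system of neighborhoods of the identity; continuity of $\mathcal{K}$ means $\lim_{k\to\infty}\sup_{s\in\mathfrak{S}(k,\infty)}\|\mathcal{K}(s)\eta-\eta\|=0$ for each $\eta\in\mathcal{H}$. $(k\;j)$ denotes the transposition of $k$ and $j$, and ${}^n\sigma_m=(n+1\;\;n+m+1)(n+2\;\;n+m+2)\cdots(n+m\;\;n+2m)$. The weak-operator limit $P_n=\lim_{m\to\infty}\mathcal{K}({}^n\sigma_m)$ exists and is a self-adjoint operator. *)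

theory Defs
  imports "HOL-Analysis.Analysis" "HOL-Combinatorics.Combinatorics"
begin

text \<open>A complex Hilbert space is modelled as a real Hilbert space (type class
  real_inner + complete_space) together with a complex structure J
  (multiplication by i): J real-linear, J (J x) = - x, J isometric for the real
  inner product.  The complex inner product (linear in the first argument) is then
  recovered as follows.\<close>

definition complex_structure :: "('h::real_inner \<Rightarrow> 'h) \<Rightarrow> bool" where
  "complex_structure J \<longleftrightarrow> linear J \<and> (\<forall>x. J (J x) = - x) \<and> (\<forall>x y. inner (J x) (J y) = inner x y)"

definition cinner :: "('h::real_inner \<Rightarrow> 'h) \<Rightarrow> 'h \<Rightarrow> 'h \<Rightarrow> complex" where
  "cinner J x y = Complex (inner x y) (- inner (J x) y)"

text \<open>The group of all bijections of N = {1,2,...}; a bijection is represented by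
  a permutation of nat fixing 0.\<close>

definition Sinf :: "(nat \<Rightarrow> nat) set" where
  "Sinf = {s. s permutes {1..}}"

definition Sfix :: "nat \<Rightarrow> (nat \<Rightarrow> nat) set" where
  "Sfix n = {s \<in> Sinf. \<forall>k\<in>{1..n}. s k = k}"

text \<open>Unitary representation of Sinf on the complex Hilbert space (with
  complex structure J): a group homomorphism into complex-linear
  (i.e. real-linear and commuting with J) surjective isometries.\<close>

definition unitary_rep :: "('h::real_inner \<Rightarrow> 'h) \<Rightarrow> ((nat \<Rightarrow> nat) \<Rightarrow> 'h \<Rightarrow> 'h) \<Rightarrow> bool" where
  "unitary_rep J K \<longleftrightarrow>
     K id = id \<and>
     (\<forall>s\<in>Sinf. \<forall>t\<in>Sinf. K (s \<circ> t) = K s \<circ> K t) \<and>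
     (\<forall>s\<in>Sinf. linear (K s) \<and> (\<forall>x. K s (J x) = J (K s x)) \<and> surj (K s) \<and>
                 (\<forall>x y. cinner J (K s x) (K s y) = cinner J x y))"

definition continuous_rep :: "((nat \<Rightarrow> nat) \<Rightarrow> 'h::real_normed_vector \<Rightarrow> 'h) \<Rightarrow> bool" where
  "continuous_rep K \<longleftrightarrow>
     (\<forall>\<eta>. (\<lambda>k. SUP s\<in>Sfix k. norm (K s \<eta> - \<eta>)) \<longlonglongrightarrow> 0)"

text \<open>nsigma n m = (n+1  n+m+1)(n+2  n+m+2)...(n+m  n+2m).\<close>

definition nsigma :: "nat \<Rightarrow> nat \<Rightarrow> nat \<Rightarrow> nat" where
  "nsigma n m = foldr (\<circ>) (map (\<lambda>i. Transposition.transpose (n + i) (n + m + i)) [1..<m+1]) id"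

end

theory Submission
  imports Defs
begin

text \<open>Write \<open>\<sigma>\<^sub>m\<close> for \<open>\<^sup>n\<sigma>\<^sub>m\<close>. For \<open>l \<ge> 2m\<close> the involution \<open>\<sigma>\<^sub>l\<close> conjugates \<open>\<sigma>\<^sub>m\<close>
  into some \<open>\<tau> \<in> S(n+l,\<infinity>)\<close>, so \<open>\<sigma>\<^sub>m \<sigma>\<^sub>l = \<sigma>\<^sub>l \<tau>\<close> and, by continuity,
  \<open>K(\<sigma>\<^sub>m) K(\<sigma>\<^sub>l) x - K(\<sigma>\<^sub>l) x \<rightarrow> 0\<close> as \<open>l \<rightarrow> \<infinity>\<close>. Each \<open>K(\<sigma>\<^sub>m)\<close> is a self-adjoint
  unitary, so the weak limit in \<open>l\<close> gives \<open>K(\<sigma>\<^sub>m) P = P\<close>, and the weak limit in \<open>m\<close>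
  then gives \<open>P P = P\<close>.\<close>

lemma weak_limit_idempotent:
  fixes U :: "nat \<Rightarrow> 'a::real_inner \<Rightarrow> 'a" and P :: "'a \<Rightarrow> 'a"
  assumes self_adjoint: "\<And>m x y. inner (U m x) y = inner x (U m y)"
    and weak_lim: "\<And>x y. (\<lambda>m. inner (U m x) y) \<longlonglongrightarrow> inner (P x) y"
    and asymp_commute: "\<And>m x. (\<lambda>l. U m (U l x) - U l x) \<longlonglongrightarrow> 0"
  shows "P \<circ> P = P"
proof
  have fixed: "inner (U m (P x)) y = inner (P x) y" for m x y
  proof -
    have "(\<lambda>l. inner (U m (U l x) - U l x) y + inner (U l x) y) \<longlonglongrightarrow> inner 0 y + inner (P x) y"
      by (intro tendsto_add tendsto_inner asymp_commute tendsto_const weak_lim)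
    then have "(\<lambda>l. inner (U l x) (U m y)) \<longlonglongrightarrow> inner (P x) y"
      by (simp add: inner_diff_left self_adjoint)
    then have "inner (P x) (U m y) = inner (P x) y"
      using weak_lim LIMSEQ_unique by blast
    then show ?thesis by (simp add: self_adjoint)
  qed
  fix x
  have "inner (P (P x)) y = inner (P x) y" for y
    using weak_lim[of "P x" y] by (simp add: fixed LIMSEQ_const_iff)
  then have "inner (P (P x) - P x) (P (P x) - P x) = 0"
    by (simp add: inner_diff_left)
  then show "(P \<circ> P) x = P x" by simp
qed

lemma foldr_comp_snoc: "foldr (\<circ>) (fs @ [f]) id = foldr (\<circ>) fs id \<circ> f"
  by (induction fs) auto

lemma foldr_comp_permutes: "(\<And>f. f \<in> set fs \<Longrightarrow> f permutes S) \<Longrightarrow> foldr (\<circ>) fs id permutes S"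
  by (induction fs) (auto intro: permutes_compose)

lemma foldr_shift_transpositions_apply:
  assumes "k \<le> m"
  shows "foldr (\<circ>) (map (\<lambda>i. Transposition.transpose (n + i) (n + m + i)) [1..<k+1]) id j
    = (if n < j \<and> j \<le> n + k then j + m else if n + m < j \<and> j \<le> n + m + k then j - m else j)"
  using assms
proof (induction k arbitrary: j)
  case (Suc k)
  let ?t = "Transposition.transpose (n + Suc k) (n + m + Suc k)"
  have "[1..<Suc k + 1] = [1..<k+1] @ [Suc k]" by simp
  then have "foldr (\<circ>) (map (\<lambda>i. Transposition.transpose (n + i) (n + m + i)) [1..<Suc k+1]) id j
      = foldr (\<circ>) (map (\<lambda>i. Transposition.transpose (n + i) (n + m + i)) [1..<k+1]) id (?t j)"
    by (simp only: map_append list.map foldr_comp_snoc comp_apply)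
  also have "\<dots> = (if n < ?t j \<and> ?t j \<le> n + k then ?t j + m
      else if n + m < ?t j \<and> ?t j \<le> n + m + k then ?t j - m else ?t j)"
    using Suc.prems by (intro Suc.IH) simp
  also have "\<dots> = (if n < j \<and> j \<le> n + Suc k then j + m
      else if n + m < j \<and> j \<le> n + m + Suc k then j - m else j)"
    using Suc.prems by (simp add: Transposition.transpose_def) arith
  finally show ?case .
qed simp

lemma nsigma_apply:
  "nsigma n m j = (if n < j \<and> j \<le> n + m then j + m else if n + m < j \<and> j \<le> n + 2*m then j - m else j)"
  using foldr_shift_transpositions_apply[of m m n j] by (simp add: nsigma_def mult_2)

lemma nsigma_in_Sinf: "nsigma n m \<in> Sinf"
  unfolding Sinf_def nsigma_def mem_Collect_eq by (rule foldr_comp_permutes) (auto intro: permutes_swap_id)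

lemma nsigma_involution: "nsigma n m \<circ> nsigma n m = id"
  by (rule ext) (auto simp: nsigma_apply)

lemma nsigma_conj_in_Sfix:
  assumes "2 * m \<le> l"
  shows "nsigma n l \<circ> nsigma n m \<circ> nsigma n l \<in> Sfix (n + l)"
proof -
  have "nsigma n l \<circ> nsigma n m \<circ> nsigma n l \<in> Sinf"
    using nsigma_in_Sinf unfolding Sinf_def by (blast intro: permutes_compose)
  then show ?thesis
    using assms unfolding Sfix_def by (auto simp: nsigma_apply)
qed

lemma Re_cinner [simp]: "Re (cinner J x y) = inner x y"
  by (simp add: cinner_def)

context
  fixes J :: "'h::real_inner \<Rightarrow> 'h" and K :: "(nat \<Rightarrow> nat) \<Rightarrow> 'h \<Rightarrow> 'h"
  assumes unitary: "unitary_rep J K"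
begin

lemma unitary_rep_compose: "s \<in> Sinf \<Longrightarrow> t \<in> Sinf \<Longrightarrow> K (s \<circ> t) = K s \<circ> K t"
  using unitary unfolding unitary_rep_def by blast

lemma unitary_rep_linear: "s \<in> Sinf \<Longrightarrow> linear (K s)"
  using unitary unfolding unitary_rep_def by blast

lemma unitary_rep_inner:
  assumes "s \<in> Sinf"
  shows "inner (K s x) (K s y) = inner x y"
proof -
  have "cinner J (K s x) (K s y) = cinner J x y"
    using unitary assms unfolding unitary_rep_def by blast
  then show ?thesis
    by (metis Re_cinner)
qed

lemma unitary_rep_norm: "s \<in> Sinf \<Longrightarrow> norm (K s x) = norm x"
  by (simp add: norm_eq_sqrt_inner unitary_rep_inner)

lemma unitary_rep_self_adjoint:
  assumes "s \<in> Sinf" "s \<circ> s = id"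
  shows "inner (K s x) y = inner x (K s y)"
proof -
  have "K s \<circ> K s = id"
    using unitary_rep_compose[OF assms(1,1)] assms(2) unitary unfolding unitary_rep_def by simp
  then have "K s (K s y) = y"
    by (metis comp_apply id_apply)
  then show ?thesis
    using unitary_rep_inner[OF assms(1), of x "K s y"] by simp
qed

lemma continuous_rep_tendsto:
  assumes "continuous_rep K" and "eventually (\<lambda>l. s l \<in> Sfix (n + l)) sequentially"
  shows "(\<lambda>l. K (s l) x - x) \<longlonglongrightarrow> 0"
proof (rule Lim_null_comparison)
  have "(\<lambda>k. SUP t\<in>Sfix k. norm (K t x - x)) \<longlonglongrightarrow> 0"
    using assms(1) unfolding continuous_rep_def by blast
  then show "(\<lambda>l. SUP t\<in>Sfix (n + l). norm (K t x - x)) \<longlonglongrightarrow> 0"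
    using LIMSEQ_ignore_initial_segment[where k = n] by (simp add: add.commute)
  have bdd: "bdd_above ((\<lambda>t. norm (K t x - x)) ` Sfix k)" for k
  proof (rule bdd_aboveI2)
    fix t assume "t \<in> Sfix k"
    then show "norm (K t x - x) \<le> 2 * norm x"
      using norm_triangle_ineq4[of "K t x" x] unitary_rep_norm unfolding Sfix_def by simp
  qed
  show "\<forall>\<^sub>F l in sequentially. norm (K (s l) x - x) \<le> (SUP t\<in>Sfix (n + l). norm (K t x - x))"
    using assms(2) by (rule eventually_mono) (rule cSUP_upper[OF _ bdd])
qed

lemma unitary_rep_nsigma_asymp_commute:
  assumes "continuous_rep K"
  shows "(\<lambda>l. K (nsigma n m) (K (nsigma n l) x) - K (nsigma n l) x) \<longlonglongrightarrow> 0"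
proof -
  define \<tau> where "\<tau> l = nsigma n l \<circ> nsigma n m \<circ> nsigma n l" for l
  have \<tau>_Sfix: "\<forall>\<^sub>F l in sequentially. \<tau> l \<in> Sfix (n + l)"
    unfolding \<tau>_def using nsigma_conj_in_Sfix eventually_sequentially by blast
  have \<tau>_Sinf: "\<tau> l \<in> Sinf" for l
    unfolding \<tau>_def using nsigma_in_Sinf unfolding Sinf_def by (blast intro: permutes_compose)
  have "nsigma n m \<circ> nsigma n l = nsigma n l \<circ> \<tau> l" for l
    unfolding \<tau>_def using nsigma_involution[of n l] by (simp add: o_assoc)
  then have "K (nsigma n m) (K (nsigma n l) x) = K (nsigma n l) (K (\<tau> l) x)" for l
    using unitary_rep_compose nsigma_in_Sinf \<tau>_Sinf by (metis comp_apply)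
  then have "K (nsigma n m) (K (nsigma n l) x) - K (nsigma n l) x = K (nsigma n l) (K (\<tau> l) x - x)" for l
    using unitary_rep_linear[OF nsigma_in_Sinf] by (simp add: linear_diff)
  moreover have "(\<lambda>l. norm (K (nsigma n l) (K (\<tau> l) x - x))) \<longlonglongrightarrow> 0"
    using continuous_rep_tendsto[OF assms \<tau>_Sfix, of x]
    by (simp add: unitary_rep_norm nsigma_in_Sinf tendsto_norm_zero_iff)
  ultimately show ?thesis
    by (simp add: tendsto_norm_zero_iff)
qed

end

theorem lemma2:
  fixes J :: "'h::{real_inner, complete_space} \<Rightarrow> 'h"
    and K :: "(nat \<Rightarrow> nat) \<Rightarrow> 'h \<Rightarrow> 'h"
    and P :: "'h \<Rightarrow> 'h"
    and n :: nat
  assumes "complex_structure J"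
    and "unitary_rep J K"
    and "continuous_rep K"
    and "\<forall>x y. (\<lambda>m. cinner J (K (nsigma n m) x) y) \<longlonglongrightarrow> cinner J (P x) y"
  shows "P \<circ> P = P"
proof (rule weak_limit_idempotent)
  show "inner (K (nsigma n m) x) y = inner x (K (nsigma n m) y)" for m x y
    using unitary_rep_self_adjoint[OF assms(2) nsigma_in_Sinf nsigma_involution] .
  show "(\<lambda>m. inner (K (nsigma n m) x) y) \<longlonglongrightarrow> inner (P x) y" for x y
    using tendsto_Re[OF assms(4)[rule_format, of x y]] by simp
  show "(\<lambda>l. K (nsigma n m) (K (nsigma n l) x) - K (nsigma n l) x) \<longlonglongrightarrow> 0" for m x
    using unitary_rep_nsigma_asymp_commute[OF assms(2,3)] .
qed

end
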